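(* Let $\iota:\mathbf{CFam}_S\to\mathbf{C}$ be an $S$-sorted CCC and $D$ a cartesian closed natural system on $\mathbf{C}$. Then there is an isomorphism of abelian groups \[ \mathrm{Der}^{\mathbf{CCC}_S}(\mathbf{C};D)\cong\Big\{d\in\prod_{f\in\mathrm{Mor}(\mathbf{C})}D_f\ \Big|\ d(f\circ g)=f_*d(g)+g^*d(f)\ \text{for composable } f,g,\ \ d(\iota(\pi_i))=0,\ \ d(\iota(\mathrm{ev}^Y_Z))=0\Big\}, \] where $\pi_i$ ranges over the projections and $\mathrm{ev}^Y_Z$ over the evaluation maps of $\mathbf{CFam}_S$.
   Context: $\mathsf{BiMag}_S$ is the set of formal expressions generated from the elements of $S$ and $1$ by $X\times Y$ and $Y^X$; $\mathbf{CFam}_S$ is the free cartesian closed category with object set $\mathsf{BiMag}_S$ and no generating morphisms (generated by identities, $!_X$, projections $\pi_i$, evaluations $\mathrm{ev}^Y_Z:Z^Y\times Y\to Z$, composition, pairing, currying). An $S$-sorted CCC is a CCC $\mathbf{C}$ with $\mathrm{Ob}(\mathbf{C})=\mathsf{BiMag}_S$ and a cartesian closed identity-on-objects functor $\iota:\mathbf{CFam}_S\to\mathbf{C}$; $\mathbf{CCC}_S$ has as morphisms the functors $F$ with $F\circ\iota=\iota'$. A natural system on $\mathbf{C}$ is a functor $D$ from the category of factorizations of $\mathbf{C}$ (objects: morphisms $f$; morphisms $f\to g$: pairs $(a,b)$ with $bfa=g$) to $\mathbf{Ab}$; $D_f=D(f)$, $a_*=D(1,a):D_f\to D_{af}$,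 $a^*=D(a,1):D_g\to D_{ga}$. $D$ is cartesian if $D_f\to\prod_kD_{\pi_kf}$, $\xi\mapsto(\pi_{k*}\xi)$, is an isomorphism for all $f:X\to X_1\times\dots\times X_n$; it is cartesian closed if moreover, for each $f:X\times Y\to Z$, the map $D_{\lambda f}\to D_f$, $\xi\mapsto\mathrm{ev}^Y_{Z*}\phi_{\lambda f}(\xi,0)$ is an isomorphism, where $\phi_g:D_g\times D_{\pi_2}\to D_{g\times 1_Y}$ is $\pi_1^*\times 1$ followed by the inverse of the cartesian isomorphism $D_{g\times1_Y}\to D_{g\pi_1}\times D_{\pi_2}$. The trivial extension $D\rtimes\mathbf{C}$ has $\mathrm{Hom}(X,Y)=\coprod_{f:X\to Y}D_f$ with composition $\xi\circ\eta=f_*\eta+g^*\xi$ ($\xi\in D_f,\eta\in D_g$); for cartesian closed $D$ it is an $S$-sorted CCC with $\tilde\iota$ sending identities, projections and evaluations to the zero elements over their images under $\iota$, and $p:D\rtimes\mathbf{C}\to\mathbf{C}$ is the projection. $\mathrm{Der}^{\mathbf{CCC}_S}(\mathbf{C};D)$ is the abelian group of morphisms $s:\mathbf{C}\to D\rtimes\mathbf{C}$ in $\mathbf{CCC}_S$ with $ps=\mathrm{id}_{\mathbf{C}}$. *)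

theory Defs
  imports Main "HOL-Library.FuncSet" "HOL-Algebra.Group"
begin

text \<open>BExp Y Z stands for the exponential object Z^Y.\<close>
datatype 's bimag = BSrt 's | BOne | BTimes "'s bimag" "'s bimag" | BExp "'s bimag" "'s bimag"

text \<open>A category with object set BiMag_S, together with the images under iota of the
projections and evaluation maps of CFam_S.\<close>
record ('s, 'm) sccc =
  c_mor :: "'m set"
  c_dom :: "'m \<Rightarrow> 's bimag"
  c_cod :: "'m \<Rightarrow> 's bimag"
  c_cmp :: "'m \<Rightarrow> 'm \<Rightarrow> 'm"
  c_id  :: "'s bimag \<Rightarrow> 'm"
  c_p1  :: "'s bimag \<Rightarrow> 's bimag \<Rightarrow> 'm"
  c_p2  :: "'s bimag \<Rightarrow> 's bimag \<Rightarrow> 'm"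
  c_ev  :: "'s bimag \<Rightarrow> 's bimag \<Rightarrow> 'm"

definition pairing :: "('s,'m,'x) sccc_scheme \<Rightarrow> 'm \<Rightarrow> 'm \<Rightarrow> 'm" where
  "pairing C f g = (THE h. h \<in> c_mor C \<and> c_dom C h = c_dom C f
      \<and> c_cod C h = BTimes (c_cod C f) (c_cod C g)
      \<and> c_cmp C (c_p1 C (c_cod C f) (c_cod C g)) h = f
      \<and> c_cmp C (c_p2 C (c_cod C f) (c_cod C g)) h = g)"

definition prodmap :: "('s,'m,'x) sccc_scheme \<Rightarrow> 'm \<Rightarrow> 'm \<Rightarrow> 'm" where
  "prodmap C h k = pairing C (c_cmp C h (c_p1 C (c_dom C h) (c_dom C k)))
                             (c_cmp C k (c_p2 C (c_dom C h) (c_dom C k)))"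

definition curry_m :: "('s,'m,'x) sccc_scheme \<Rightarrow> 's bimag \<Rightarrow> 's bimag \<Rightarrow> 'm \<Rightarrow> 'm" where
  "curry_m C X Y f = (THE h. h \<in> c_mor C \<and> c_dom C h = X \<and> c_cod C h = BExp Y (c_cod C f)
      \<and> c_cmp C (c_ev C Y (c_cod C f)) (prodmap C h (c_id C Y)) = f)"

definition bang :: "('s,'m,'x) sccc_scheme \<Rightarrow> 's bimag \<Rightarrow> 'm" where
  "bang C X = (THE h. h \<in> c_mor C \<and> c_dom C h = X \<and> c_cod C h = BOne)"

definition is_sccc :: "('s,'m,'x) sccc_scheme \<Rightarrow> bool" where
  "is_sccc C \<longleftrightarrow>
    \<comment> \<open>category axioms\<close>
    (\<forall>X. c_id C X \<in> c_mor C \<and> c_dom C (c_id C X) = X \<and> c_cod C (c_id C X) = X) \<and>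
    (\<forall>f\<in>c_mor C. \<forall>g\<in>c_mor C. c_dom C f = c_cod C g \<longrightarrow>
        c_cmp C f g \<in> c_mor C \<and> c_dom C (c_cmp C f g) = c_dom C g \<and> c_cod C (c_cmp C f g) = c_cod C f) \<and>
    (\<forall>f\<in>c_mor C. \<forall>g\<in>c_mor C. \<forall>h\<in>c_mor C. c_dom C f = c_cod C g \<longrightarrow> c_dom C g = c_cod C h \<longrightarrow>
        c_cmp C (c_cmp C f g) h = c_cmp C f (c_cmp C g h)) \<and>
    (\<forall>f\<in>c_mor C. c_cmp C (c_id C (c_cod C f)) f = f \<and> c_cmp C f (c_id C (c_dom C f)) = f) \<and>
    \<comment> \<open>structure maps (images of the generators of CFam_S under iota)\<close>
    (\<forall>X Y. c_p1 C X Y \<in> c_mor C \<and> c_dom C (c_p1 C X Y) = BTimes X Y \<and> c_cod C (c_p1 C X Y) = X) \<and>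
    (\<forall>X Y. c_p2 C X Y \<in> c_mor C \<and> c_dom C (c_p2 C X Y) = BTimes X Y \<and> c_cod C (c_p2 C X Y) = Y) \<and>
    (\<forall>Y Z. c_ev C Y Z \<in> c_mor C \<and> c_dom C (c_ev C Y Z) = BTimes (BExp Y Z) Y \<and> c_cod C (c_ev C Y Z) = Z) \<and>
    \<comment> \<open>iota is cartesian closed: 1 terminal, X x Y a product, Z^Y an exponential\<close>
    (\<forall>X. \<exists>!h. h \<in> c_mor C \<and> c_dom C h = X \<and> c_cod C h = BOne) \<and>
    (\<forall>f\<in>c_mor C. \<forall>g\<in>c_mor C. c_dom C f = c_dom C g \<longrightarrow>
        (\<exists>!h. h \<in> c_mor C \<and> c_dom C h = c_dom C f \<and> c_cod C h = BTimes (c_cod C f) (c_cod C g)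
            \<and> c_cmp C (c_p1 C (c_cod C f) (c_cod C g)) h = f
            \<and> c_cmp C (c_p2 C (c_cod C f) (c_cod C g)) h = g)) \<and>
    (\<forall>f\<in>c_mor C. \<forall>X Y. c_dom C f = BTimes X Y \<longrightarrow>
        (\<exists>!h. h \<in> c_mor C \<and> c_dom C h = X \<and> c_cod C h = BExp Y (c_cod C f)
            \<and> c_cmp C (c_ev C Y (c_cod C f)) (prodmap C h (c_id C Y)) = f))"

datatype 's cterm =
    TId "'s bimag" | TBang "'s bimag" | TP1 "'s bimag" "'s bimag" | TP2 "'s bimag" "'s bimag"
  | TEv "'s bimag" "'s bimag" | TComp "'s cterm" "'s cterm" | TPair "'s cterm" "'s cterm"
  | TCurry "'s cterm"

fun bfst :: "'s bimag \<Rightarrow> 's bimag" where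
  "bfst (BTimes X Y) = X" | "bfst _ = BOne"
fun bsnd :: "'s bimag \<Rightarrow> 's bimag" where
  "bsnd (BTimes X Y) = Y" | "bsnd _ = BOne"
fun is_times :: "'s bimag \<Rightarrow> bool" where
  "is_times (BTimes X Y) = True" | "is_times _ = False"

fun tdom :: "'s cterm \<Rightarrow> 's bimag" and tcod :: "'s cterm \<Rightarrow> 's bimag" where
  "tdom (TId X) = X" | "tcod (TId X) = X"
| "tdom (TBang X) = X" | "tcod (TBang X) = BOne"
| "tdom (TP1 X Y) = BTimes X Y" | "tcod (TP1 X Y) = X"
| "tdom (TP2 X Y) = BTimes X Y" | "tcod (TP2 X Y) = Y"
| "tdom (TEv Y Z) = BTimes (BExp Y Z) Y" | "tcod (TEv Y Z) = Z"
| "tdom (TComp t u) = tdom u" | "tcod (TComp t u) = tcod t"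
| "tdom (TPair t u) = tdom t" | "tcod (TPair t u) = BTimes (tcod t) (tcod u)"
| "tdom (TCurry t) = bfst (tdom t)" | "tcod (TCurry t) = BExp (bsnd (tdom t)) (tcod t)"

fun wt :: "'s cterm \<Rightarrow> bool" where
  "wt (TComp t u) = (wt t \<and> wt u \<and> tdom t = tcod u)"
| "wt (TPair t u) = (wt t \<and> wt u \<and> tdom t = tdom u)"
| "wt (TCurry t) = (wt t \<and> is_times (tdom t))"
| "wt _ = True"

text \<open>Interpretation of a CFam_S term in an S-sorted CCC; for C this is iota.\<close>
fun interp :: "('s,'m,'x) sccc_scheme \<Rightarrow> 's cterm \<Rightarrow> 'm" where
  "interp C (TId X) = c_id C X"
| "interp C (TBang X) = bang C X"
| "interp C (TP1 X Y) = c_p1 C X Y"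
| "interp C (TP2 X Y) = c_p2 C X Y"
| "interp C (TEv Y Z) = c_ev C Y Z"
| "interp C (TComp t u) = c_cmp C (interp C t) (interp C u)"
| "interp C (TPair t u) = pairing C (interp C t) (interp C u)"
| "interp C (TCurry t) = curry_m C (bfst (tdom t)) (bsnd (tdom t)) (interp C t)"

text \<open>D_f is the subgroup ns_D f of the ambient abelian group 'a;
ns_map f a b is D(a,b) : D_f -> D_{b f a}.\<close>
record ('m, 'a) natsys =
  ns_D   :: "'m \<Rightarrow> 'a set"
  ns_map :: "'m \<Rightarrow> 'm \<Rightarrow> 'm \<Rightarrow> 'a \<Rightarrow> 'a"

definition is_natsys :: "('s,'m,'x) sccc_scheme \<Rightarrow> ('m, 'a::ab_group_add) natsys \<Rightarrow> bool" where
  "is_natsys C D \<longleftrightarrow>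
    (\<forall>f\<in>c_mor C. 0 \<in> ns_D D f \<and> (\<forall>x\<in>ns_D D f. \<forall>y\<in>ns_D D f. x + y \<in> ns_D D f) \<and>
        (\<forall>x\<in>ns_D D f. - x \<in> ns_D D f)) \<and>
    (\<forall>f\<in>c_mor C. \<forall>a\<in>c_mor C. \<forall>b\<in>c_mor C. c_cod C a = c_dom C f \<longrightarrow> c_dom C b = c_cod C f \<longrightarrow>
        (\<forall>x\<in>ns_D D f. ns_map D f a b x \<in> ns_D D (c_cmp C b (c_cmp C f a))) \<and>
        (\<forall>x\<in>ns_D D f. \<forall>y\<in>ns_D D f. ns_map D f a b (x + y) = ns_map D f a b x + ns_map D f a b y)) \<and>
    (\<forall>f\<in>c_mor C. \<forall>x\<in>ns_D D f. ns_map D f (c_id C (c_dom C f)) (c_id C (c_cod C f)) x = x) \<and>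
    (\<forall>f\<in>c_mor C. \<forall>a\<in>c_mor C. \<forall>b\<in>c_mor C. \<forall>a'\<in>c_mor C. \<forall>b'\<in>c_mor C.
        c_cod C a = c_dom C f \<longrightarrow> c_dom C b = c_cod C f \<longrightarrow> c_cod C a' = c_dom C a \<longrightarrow> c_dom C b' = c_cod C b \<longrightarrow>
        (\<forall>x\<in>ns_D D f. ns_map D (c_cmp C b (c_cmp C f a)) a' b' (ns_map D f a b x)
                        = ns_map D f (c_cmp C a a') (c_cmp C b' b) x))"

text \<open>a_* : D_f -> D_{af} and a^* : D_g -> D_{ga}.\<close>
definition lower :: "('s,'m,'x) sccc_scheme \<Rightarrow> ('m,'a) natsys \<Rightarrow> 'm \<Rightarrow> 'm \<Rightarrow> 'a \<Rightarrow> 'a" where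
  "lower C D f a x = ns_map D f (c_id C (c_dom C f)) a x"
definition upper :: "('s,'m,'x) sccc_scheme \<Rightarrow> ('m,'a) natsys \<Rightarrow> 'm \<Rightarrow> 'm \<Rightarrow> 'a \<Rightarrow> 'a" where
  "upper C D g a x = ns_map D g a (c_id C (c_cod C g)) x"

definition is_cartesian :: "('s,'m,'x) sccc_scheme \<Rightarrow> ('m, 'a::ab_group_add) natsys \<Rightarrow> bool" where
  "is_cartesian C D \<longleftrightarrow>
    (\<forall>f\<in>c_mor C. c_cod C f = BOne \<longrightarrow> ns_D D f = {0}) \<and>
    (\<forall>f\<in>c_mor C. \<forall>X Y. c_cod C f = BTimes X Y \<longrightarrow>
       bij_betw (\<lambda>x. (lower C D f (c_p1 C X Y) x, lower C D f (c_p2 C X Y) x))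
         (ns_D D f) (ns_D D (c_cmp C (c_p1 C X Y) f) \<times> ns_D D (c_cmp C (c_p2 C X Y) f)))"

text \<open>phi_g(x, 0) for g : X -> Z^Y: the unique element of D_{g x 1_Y} whose images under
pi_1_* and pi_2_* are pi_1^* x and 0.\<close>
definition phi0 :: "('s,'m,'x) sccc_scheme \<Rightarrow> ('m,'a::ab_group_add) natsys \<Rightarrow> 's bimag \<Rightarrow> 's bimag \<Rightarrow> 'm \<Rightarrow> 'a \<Rightarrow> 'a" where
  "phi0 C D X Y g x = (let gy = prodmap C g (c_id C Y) in
     THE y. y \<in> ns_D D gy
       \<and> lower C D gy (c_p1 C (c_cod C g) Y) y = upper C D g (c_p1 C X Y) x
       \<and> lower C D gy (c_p2 C (c_cod C g) Y) y = 0)"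

definition is_cart_closed :: "('s,'m,'x) sccc_scheme \<Rightarrow> ('m, 'a::ab_group_add) natsys \<Rightarrow> bool" where
  "is_cart_closed C D \<longleftrightarrow> is_cartesian C D \<and>
    (\<forall>f\<in>c_mor C. \<forall>X Y. c_dom C f = BTimes X Y \<longrightarrow>
       (let lf = curry_m C X Y f in
        bij_betw (\<lambda>x. lower C D (prodmap C lf (c_id C Y)) (c_ev C Y (c_cod C f)) (phi0 C D X Y lf x))
          (ns_D D lf) (ns_D D f)))"

definition triv :: "('s,'m,'x) sccc_scheme \<Rightarrow> ('m,'a::ab_group_add) natsys \<Rightarrow> ('s, 'm \<times> 'a) sccc" where
  "triv C D = \<lparr> c_mor = {(f, x). f \<in> c_mor C \<and> x \<in> ns_D D f},
     c_dom = (\<lambda>p. c_dom C (fst p)), c_cod = (\<lambda>p. c_cod C (fst p)),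
     c_cmp = (\<lambda>p q. (c_cmp C (fst p) (fst q),
                     lower C D (fst q) (fst p) (snd q) + upper C D (fst p) (fst q) (snd p))),
     c_id = (\<lambda>X. (c_id C X, 0)),
     c_p1 = (\<lambda>X Y. (c_p1 C X Y, 0)), c_p2 = (\<lambda>X Y. (c_p2 C X Y, 0)),
     c_ev = (\<lambda>Y Z. (c_ev C Y Z, 0)) \<rparr>"

text \<open>Der^{CCC_S}(C;D): functors s : C -> D x| C with p s = id and s o iota = iota~
(extensional outside the morphisms of C).\<close>
definition Der :: "('s,'m,'x) sccc_scheme \<Rightarrow> ('m,'a::ab_group_add) natsys \<Rightarrow> ('m \<Rightarrow> 'm \<times> 'a) set" where
  "Der C D = {s. s \<in> extensional (c_mor C) \<and>
     (\<forall>f\<in>c_mor C. s f \<in> c_mor (triv C D) \<and> fst (s f) = f) \<and>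
     (\<forall>X. s (c_id C X) = c_id (triv C D) X) \<and>
     (\<forall>f\<in>c_mor C. \<forall>g\<in>c_mor C. c_dom C f = c_cod C g \<longrightarrow>
         s (c_cmp C f g) = c_cmp (triv C D) (s f) (s g)) \<and>
     (\<forall>t. wt t \<longrightarrow> s (interp C t) = interp (triv C D) t)}"

definition Der_grp :: "('s,'m,'x) sccc_scheme \<Rightarrow> ('m,'a::ab_group_add) natsys \<Rightarrow> ('m \<Rightarrow> 'm \<times> 'a) monoid" where
  "Der_grp C D = \<lparr> carrier = Der C D,
     mult = (\<lambda>s s' f. if f \<in> c_mor C then (f, snd (s f) + snd (s' f)) else undefined),
     one = (\<lambda>f. if f \<in> c_mor C then (f, 0) else undefined) \<rparr>"

definition DerFun :: "('s,'m,'x) sccc_scheme \<Rightarrow> ('m,'a::ab_group_add) natsys \<Rightarrow> ('m \<Rightarrow> 'a) set" where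
  "DerFun C D = {d. d \<in> extensional (c_mor C) \<and>
     (\<forall>f\<in>c_mor C. d f \<in> ns_D D f) \<and>
     (\<forall>f\<in>c_mor C. \<forall>g\<in>c_mor C. c_dom C f = c_cod C g \<longrightarrow>
         d (c_cmp C f g) = lower C D g f (d g) + upper C D f g (d f)) \<and>
     (\<forall>X Y. d (c_p1 C X Y) = 0 \<and> d (c_p2 C X Y) = 0) \<and>
     (\<forall>Y Z. d (c_ev C Y Z) = 0)}"

definition DerFun_grp :: "('s,'m,'x) sccc_scheme \<Rightarrow> ('m,'a::ab_group_add) natsys \<Rightarrow> ('m \<Rightarrow> 'a) monoid" where
  "DerFun_grp C D = \<lparr> carrier = DerFun C D,
     mult = (\<lambda>d d' f. if f \<in> c_mor C then d f + d' f else undefined),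
     one = (\<lambda>f. if f \<in> c_mor C then 0 else undefined) \<rparr>"

end

theory Submission
  imports Defs
begin

text \<open>
A section s of p : D x| C \<rightarrow> C is determined by d f = snd (s f) \<in> D_f; functoriality
of s is exactly the Leibniz rule for d, and s fixes identities, projections and evaluations
iff d vanishes on them. The substance is the converse: for such a d, the section
f \<mapsto> (f, d f) must also commute with the remaining operations of a cartesian closed
category. Since D is cartesian closed, these operations are computed componentwise in
D x| C: D_f = 0 when f has codomain 1, the D-part of the pairing of (a, x) and (b, y) is
the unique z with pi_1_* z = x and pi_2_* z = y, and the D-part of the currying of (f, x) is
the preimage of x under D_{\<lambda>f} \<cong> D_f. The Leibniz rule together with d pi_i = 0 and
d ev = 0 shows that d \<langle>a, b\<rangle> and d (\<lambda>f) are exactly these elements. Addition is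
pointwise on both sides, so d \<mapsto> (f \<mapsto> (f, d f)) is a group isomorphism.
\<close>

section \<open>Sorted cartesian closed categories\<close>

locale sorted_ccc =
  fixes C :: "('s, 'm) sccc"
  assumes sccc: "is_sccc C"
begin

lemma
  shows id_mor [simp]: "c_id C X \<in> c_mor C"
    and dom_id [simp]: "c_dom C (c_id C X) = X"
    and cod_id [simp]: "c_cod C (c_id C X) = X"
    and p1_mor [simp]: "c_p1 C X Y \<in> c_mor C"
    and dom_p1 [simp]: "c_dom C (c_p1 C X Y) = BTimes X Y"
    and cod_p1 [simp]: "c_cod C (c_p1 C X Y) = X"
    and p2_mor [simp]: "c_p2 C X Y \<in> c_mor C"
    and dom_p2 [simp]: "c_dom C (c_p2 C X Y) = BTimes X Y"
    and cod_p2 [simp]: "c_cod C (c_p2 C X Y) = Y"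
    and ev_mor [simp]: "c_ev C Y Z \<in> c_mor C"
    and dom_ev [simp]: "c_dom C (c_ev C Y Z) = BTimes (BExp Y Z) Y"
    and cod_ev [simp]: "c_cod C (c_ev C Y Z) = Z"
  using sccc unfolding is_sccc_def by simp_all

lemma
  assumes "f \<in> c_mor C" "g \<in> c_mor C" "c_dom C f = c_cod C g"
  shows cmp_mor [simp]: "c_cmp C f g \<in> c_mor C"
    and dom_cmp [simp]: "c_dom C (c_cmp C f g) = c_dom C g"
    and cod_cmp [simp]: "c_cod C (c_cmp C f g) = c_cod C f"
  using sccc assms unfolding is_sccc_def by simp_all

lemma
  assumes "f \<in> c_mor C"
  shows id_left [simp]: "c_cod C f = Y \<Longrightarrow> c_cmp C (c_id C Y) f = f"
    and id_right [simp]: "c_dom C f = X \<Longrightarrow> c_cmp C f (c_id C X) = f"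
  using sccc assms unfolding is_sccc_def by auto

lemma terminal_ex1: "\<exists>!h. h \<in> c_mor C \<and> c_dom C h = X \<and> c_cod C h = BOne"
  using sccc unfolding is_sccc_def by simp

lemma bang: "bang C X \<in> c_mor C" "c_dom C (bang C X) = X" "c_cod C (bang C X) = BOne"
  using theI'[OF terminal_ex1] unfolding bang_def by blast+

lemma bang_unique: "h \<in> c_mor C \<Longrightarrow> c_dom C h = X \<Longrightarrow> c_cod C h = BOne \<Longrightarrow> h = bang C X"
  unfolding bang_def by (rule the1_equality[OF terminal_ex1, symmetric]) simp

lemma product_ex1:
  assumes "f \<in> c_mor C" "g \<in> c_mor C" "c_dom C f = c_dom C g"
  shows "\<exists>!h. h \<in> c_mor C \<and> c_dom C h = c_dom C f \<and> c_cod C h = BTimes (c_cod C f) (c_cod C g)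
            \<and> c_cmp C (c_p1 C (c_cod C f) (c_cod C g)) h = f
            \<and> c_cmp C (c_p2 C (c_cod C f) (c_cod C g)) h = g"
  using sccc assms unfolding is_sccc_def by simp

lemma pairing:
  assumes "f \<in> c_mor C" "g \<in> c_mor C" "c_dom C f = c_dom C g"
  shows "pairing C f g \<in> c_mor C" "c_dom C (pairing C f g) = c_dom C f"
    "c_cod C (pairing C f g) = BTimes (c_cod C f) (c_cod C g)"
    "c_cmp C (c_p1 C (c_cod C f) (c_cod C g)) (pairing C f g) = f"
    "c_cmp C (c_p2 C (c_cod C f) (c_cod C g)) (pairing C f g) = g"
  using theI'[OF product_ex1[OF assms]] unfolding pairing_def by blast+

lemma pairing_unique:
  assumes "f \<in> c_mor C" "g \<in> c_mor C" "c_dom C f = c_dom C g"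
    and "h \<in> c_mor C" "c_dom C h = c_dom C f" "c_cod C h = BTimes (c_cod C f) (c_cod C g)"
    and "c_cmp C (c_p1 C (c_cod C f) (c_cod C g)) h = f"
    and "c_cmp C (c_p2 C (c_cod C f) (c_cod C g)) h = g"
  shows "h = pairing C f g"
  unfolding pairing_def
  by (rule the1_equality[OF product_ex1[OF assms(1-3)], symmetric]) (use assms in blast)

lemma prodmap_id:
  assumes "k \<in> c_mor C" "c_dom C k = X"
  shows "prodmap C k (c_id C Y) = pairing C (c_cmp C k (c_p1 C X Y)) (c_p2 C X Y)"
    and "prodmap C k (c_id C Y) \<in> c_mor C"
    and "c_dom C (prodmap C k (c_id C Y)) = BTimes X Y"
    and "c_cod C (prodmap C k (c_id C Y)) = BTimes (c_cod C k) Y"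
proof -
  show eq: "prodmap C k (c_id C Y) = pairing C (c_cmp C k (c_p1 C X Y)) (c_p2 C X Y)"
    unfolding prodmap_def using assms by simp
  show "prodmap C k (c_id C Y) \<in> c_mor C" "c_dom C (prodmap C k (c_id C Y)) = BTimes X Y"
    "c_cod C (prodmap C k (c_id C Y)) = BTimes (c_cod C k) Y"
    unfolding eq using pairing[of "c_cmp C k (c_p1 C X Y)" "c_p2 C X Y"] assms by simp_all
qed

lemma exponential_ex1:
  assumes "f \<in> c_mor C" "c_dom C f = BTimes X Y"
  shows "\<exists>!h. h \<in> c_mor C \<and> c_dom C h = X \<and> c_cod C h = BExp Y (c_cod C f)
            \<and> c_cmp C (c_ev C Y (c_cod C f)) (prodmap C h (c_id C Y)) = f"
  using sccc assms unfolding is_sccc_def by simp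

lemma curry_m:
  assumes "f \<in> c_mor C" "c_dom C f = BTimes X Y"
  shows "curry_m C X Y f \<in> c_mor C" "c_dom C (curry_m C X Y f) = X"
    "c_cod C (curry_m C X Y f) = BExp Y (c_cod C f)"
    "c_cmp C (c_ev C Y (c_cod C f)) (prodmap C (curry_m C X Y f) (c_id C Y)) = f"
  using theI'[OF exponential_ex1[OF assms]] unfolding curry_m_def by blast+

lemma curry_unique:
  assumes "f \<in> c_mor C" "c_dom C f = BTimes X Y"
    and "h \<in> c_mor C" "c_dom C h = X" "c_cod C h = BExp Y (c_cod C f)"
    and "c_cmp C (c_ev C Y (c_cod C f)) (prodmap C h (c_id C Y)) = f"
  shows "h = curry_m C X Y f"
  unfolding curry_m_def
  by (rule the1_equality[OF exponential_ex1[OF assms(1,2)], symmetric]) (use assms in blast)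

lemma interp_typed:
  assumes "wt t"
  shows "interp C t \<in> c_mor C \<and> c_dom C (interp C t) = tdom t \<and> c_cod C (interp C t) = tcod t"
  using assms
proof (induction t)
  case (TCurry t)
  then obtain X Y where XY: "tdom t = BTimes X Y" by (cases "tdom t") auto
  with TCurry show ?case using curry_m[of "interp C t" X Y] by simp
next
  case (TPair t u)
  then show ?case using pairing[of "interp C t" "interp C u"] by simp
qed (simp_all add: bang)

end

section \<open>Natural systems and derivations\<close>

lemma additive_on_zero_uminus:
  fixes h :: "'a::ab_group_add \<Rightarrow> 'b::ab_group_add"
  assumes add: "\<And>x y. x \<in> A \<Longrightarrow> y \<in> A \<Longrightarrow> h (x + y) = h x + h y"
    and zero: "0 \<in> A" and uminus: "\<And>x. x \<in> A \<Longrightarrow> - x \<in> A"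
  shows "h 0 = 0" and "x \<in> A \<Longrightarrow> h (- x) = - h x"
proof -
  show h0: "h 0 = 0" using add[OF zero zero] by simp
  show "h (- x) = - h x" if "x \<in> A"
    using add[OF uminus[OF that] that] h0 by (simp add: eq_neg_iff_add_eq_0)
qed

locale natural_system = sorted_ccc C for C :: "('s, 'm) sccc" +
  fixes D :: "('m, 'a::ab_group_add) natsys"
  assumes natsys: "is_natsys C D"
begin

lemma
  assumes "f \<in> c_mor C"
  shows zero_in_D [simp]: "0 \<in> ns_D D f"
    and add_in_D: "x \<in> ns_D D f \<Longrightarrow> y \<in> ns_D D f \<Longrightarrow> x + y \<in> ns_D D f"
    and uminus_in_D: "x \<in> ns_D D f \<Longrightarrow> - x \<in> ns_D D f"
  using natsys assms unfolding is_natsys_def by simp_all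

lemma
  assumes "f \<in> c_mor C" "a \<in> c_mor C" "b \<in> c_mor C"
    and "c_cod C a = c_dom C f" "c_dom C b = c_cod C f" "x \<in> ns_D D f"
  shows ns_map_in: "ns_map D f a b x \<in> ns_D D (c_cmp C b (c_cmp C f a))"
    and ns_map_add: "y \<in> ns_D D f \<Longrightarrow>
           ns_map D f a b (x + y) = ns_map D f a b x + ns_map D f a b y"
  using natsys assms unfolding is_natsys_def by simp_all

lemma lower_add:
  assumes "f \<in> c_mor C" "a \<in> c_mor C" "c_dom C a = c_cod C f"
    and "x \<in> ns_D D f" "y \<in> ns_D D f"
  shows "lower C D f a (x + y) = lower C D f a x + lower C D f a y"
  unfolding lower_def using ns_map_add assms by simp

lemma
  assumes "f \<in> c_mor C" "a \<in> c_mor C" "c_dom C a = c_cod C f"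
  shows lower_zero [simp]: "lower C D f a 0 = 0"
    and lower_uminus: "x \<in> ns_D D f \<Longrightarrow> lower C D f a (- x) = - lower C D f a x"
  using additive_on_zero_uminus[OF lower_add[OF assms] zero_in_D uminus_in_D] assms by simp_all

lemma upper_in:
  assumes "g \<in> c_mor C" "a \<in> c_mor C" "c_cod C a = c_dom C g" "x \<in> ns_D D g"
  shows "upper C D g a x \<in> ns_D D (c_cmp C g a)"
  unfolding upper_def using ns_map_in[of g a "c_id C (c_cod C g)" x] assms by simp

lemma upper_add:
  assumes "g \<in> c_mor C" "a \<in> c_mor C" "c_cod C a = c_dom C g"
    and "x \<in> ns_D D g" "y \<in> ns_D D g"
  shows "upper C D g a (x + y) = upper C D g a x + upper C D g a y"
  unfolding upper_def using ns_map_add assms by simp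

lemma
  assumes "g \<in> c_mor C" "a \<in> c_mor C" "c_cod C a = c_dom C g"
  shows upper_zero [simp]: "upper C D g a 0 = 0"
    and upper_uminus: "x \<in> ns_D D g \<Longrightarrow> upper C D g a (- x) = - upper C D g a x"
  using additive_on_zero_uminus[OF upper_add[OF assms] zero_in_D uminus_in_D] assms by simp_all

lemma
  assumes "f \<in> c_mor C" "x \<in> ns_D D f"
  shows lower_id: "lower C D f (c_id C (c_cod C f)) x = x"
    and upper_id: "upper C D f (c_id C (c_dom C f)) x = x"
  using natsys assms unfolding is_natsys_def lower_def upper_def by simp_all

lemma
  assumes "d \<in> DerFun C D"
  shows DerFun_in_D: "f \<in> c_mor C \<Longrightarrow> d f \<in> ns_D D f"
    and DerFun_cmp: "f \<in> c_mor C \<Longrightarrow> g \<in> c_mor C \<Longrightarrow> c_dom C f = c_cod C g \<Longrightarrow>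
         d (c_cmp C f g) = lower C D g f (d g) + upper C D f g (d f)"
    and DerFun_p1 [simp]: "d (c_p1 C X Y) = 0"
    and DerFun_p2 [simp]: "d (c_p2 C X Y) = 0"
    and DerFun_ev [simp]: "d (c_ev C Y Z) = 0"
    and DerFun_extensional: "d \<in> extensional (c_mor C)"
  using assms unfolding DerFun_def by simp_all

lemma DerFun_id [simp]:
  assumes d: "d \<in> DerFun C D"
  shows "d (c_id C X) = 0"
proof -
  have "d (c_id C X) = d (c_id C X) + d (c_id C X)"
    using DerFun_cmp[OF d, of "c_id C X" "c_id C X"] DerFun_in_D[OF d, of "c_id C X"]
      lower_id[of "c_id C X"] upper_id[of "c_id C X"] by simp
  then show ?thesis by simp
qed

lemma
  assumes d: "d \<in> DerFun C D"
    and "f \<in> c_mor C" "g \<in> c_mor C" "c_dom C f = c_cod C g"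
  shows DerFun_cmp_left_zero: "d f = 0 \<Longrightarrow> d (c_cmp C f g) = lower C D g f (d g)"
    and DerFun_cmp_right_zero: "d g = 0 \<Longrightarrow> d (c_cmp C f g) = upper C D f g (d f)"
  using DerFun_cmp[OF assms] assms by simp_all

lemma DerFun_pairing:
  assumes d: "d \<in> DerFun C D" and "a \<in> c_mor C" "b \<in> c_mor C" "c_dom C a = c_dom C b"
  shows "lower C D (pairing C a b) (c_p1 C (c_cod C a) (c_cod C b)) (d (pairing C a b)) = d a"
    and "lower C D (pairing C a b) (c_p2 C (c_cod C a) (c_cod C b)) (d (pairing C a b)) = d b"
  using DerFun_cmp_left_zero[OF d, of "c_p1 C (c_cod C a) (c_cod C b)" "pairing C a b"]
    DerFun_cmp_left_zero[OF d, of "c_p2 C (c_cod C a) (c_cod C b)" "pairing C a b"]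
    pairing[OF assms(2-4)] d by simp_all

lemma DerFun_zero: "restrict (\<lambda>f. 0) (c_mor C) \<in> DerFun C D"
  unfolding DerFun_def by auto

lemma DerFun_add:
  assumes d: "d \<in> DerFun C D" and e: "e \<in> DerFun C D"
  shows "restrict (\<lambda>f. d f + e f) (c_mor C) \<in> DerFun C D"
  unfolding DerFun_def
  using DerFun_cmp[OF d] DerFun_cmp[OF e] DerFun_in_D[OF d] DerFun_in_D[OF e]
    add_in_D lower_add upper_add d e
  by (auto simp: algebra_simps)

lemma DerFun_uminus:
  assumes d: "d \<in> DerFun C D"
  shows "restrict (\<lambda>f. - d f) (c_mor C) \<in> DerFun C D"
  unfolding DerFun_def
  using DerFun_cmp[OF d] DerFun_in_D[OF d] uminus_in_D lower_uminus upper_uminus d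
  by (auto simp: algebra_simps)

lemma comm_group_DerFun_grp: "comm_group (DerFun_grp C D)"
proof (rule comm_groupI)
  fix d e assume "d \<in> carrier (DerFun_grp C D)" "e \<in> carrier (DerFun_grp C D)"
  then show "d \<otimes>\<^bsub>DerFun_grp C D\<^esub> e \<in> carrier (DerFun_grp C D)"
    using DerFun_add unfolding DerFun_grp_def restrict_def by simp
next
  show "\<one>\<^bsub>DerFun_grp C D\<^esub> \<in> carrier (DerFun_grp C D)"
    using DerFun_zero unfolding DerFun_grp_def restrict_def by simp
next
  fix d assume "d \<in> carrier (DerFun_grp C D)"
  then have "d \<in> extensional (c_mor C)"
    using DerFun_extensional by (simp add: DerFun_grp_def)
  then show "\<one>\<^bsub>DerFun_grp C D\<^esub> \<otimes>\<^bsub>DerFun_grp C D\<^esub> d = d"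
    by (intro ext) (simp add: DerFun_grp_def extensional_def)
next
  fix d assume "d \<in> carrier (DerFun_grp C D)"
  then show "\<exists>e\<in>carrier (DerFun_grp C D). e \<otimes>\<^bsub>DerFun_grp C D\<^esub> d = \<one>\<^bsub>DerFun_grp C D\<^esub>"
    using DerFun_uminus unfolding DerFun_grp_def restrict_def by force
qed (auto simp: DerFun_grp_def add.assoc add.commute)

end

section \<open>The trivial extension\<close>

lemma triv_simps [simp]:
  "c_mor (triv C D) = {(f, x). f \<in> c_mor C \<and> x \<in> ns_D D f}"
  "c_dom (triv C D) p = c_dom C (fst p)"
  "c_cod (triv C D) p = c_cod C (fst p)"
  "c_cmp (triv C D) p q = (c_cmp C (fst p) (fst q),
     lower C D (fst q) (fst p) (snd q) + upper C D (fst p) (fst q) (snd p))"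
  "c_id (triv C D) X = (c_id C X, 0)"
  "c_p1 (triv C D) X Y = (c_p1 C X Y, 0)"
  "c_p2 (triv C D) X Y = (c_p2 C X Y, 0)"
  "c_ev (triv C D) Y Z = (c_ev C Y Z, 0)"
  by (simp_all add: triv_def)

locale cart_closed_natural_system = natural_system +
  assumes cart_closed: "is_cart_closed C D"
begin

lemma D_terminal: "f \<in> c_mor C \<Longrightarrow> c_cod C f = BOne \<Longrightarrow> ns_D D f = {0}"
  using cart_closed unfolding is_cart_closed_def is_cartesian_def by simp

lemma cartesian_bij:
  assumes "f \<in> c_mor C" "c_cod C f = BTimes X Y"
  shows "bij_betw (\<lambda>z. (lower C D f (c_p1 C X Y) z, lower C D f (c_p2 C X Y) z))
           (ns_D D f) (ns_D D (c_cmp C (c_p1 C X Y) f) \<times> ns_D D (c_cmp C (c_p2 C X Y) f))"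
  using cart_closed assms unfolding is_cart_closed_def is_cartesian_def by simp

lemma cartesian_eqI:
  assumes "f \<in> c_mor C" "c_cod C f = BTimes X Y" "z \<in> ns_D D f" "z' \<in> ns_D D f"
    and "lower C D f (c_p1 C X Y) z = lower C D f (c_p1 C X Y) z'"
    and "lower C D f (c_p2 C X Y) z = lower C D f (c_p2 C X Y) z'"
  shows "z = z'"
  using bij_betw_imp_inj_on[OF cartesian_bij[OF assms(1,2)]] assms(3-6) by (auto dest: inj_onD)

lemma cartesian_exists:
  assumes "f \<in> c_mor C" "c_cod C f = BTimes X Y"
    and "u \<in> ns_D D (c_cmp C (c_p1 C X Y) f)" "v \<in> ns_D D (c_cmp C (c_p2 C X Y) f)"
  obtains z where "z \<in> ns_D D f" "lower C D f (c_p1 C X Y) z = u" "lower C D f (c_p2 C X Y) z = v"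
  using bij_betw_imp_surj_on[OF cartesian_bij[OF assms(1,2)]] assms(3,4) by force

lemma curry_bij:
  assumes "f \<in> c_mor C" "c_dom C f = BTimes X Y"
  shows "bij_betw (\<lambda>x. lower C D (prodmap C (curry_m C X Y f) (c_id C Y)) (c_ev C Y (c_cod C f))
             (phi0 C D X Y (curry_m C X Y f) x)) (ns_D D (curry_m C X Y f)) (ns_D D f)"
  using cart_closed assms unfolding is_cart_closed_def by (simp add: Let_def)

lemma phi0_eqI:
  assumes k: "k \<in> c_mor C" "c_dom C k = X" and z: "z \<in> ns_D D (prodmap C k (c_id C Y))"
    and z1: "lower C D (prodmap C k (c_id C Y)) (c_p1 C (c_cod C k) Y) z
               = upper C D k (c_p1 C X Y) x"
    and z2: "lower C D (prodmap C k (c_id C Y)) (c_p2 C (c_cod C k) Y) z = 0"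
  shows "phi0 C D X Y k x = z"
  unfolding phi0_def Let_def
proof (rule the_equality)
  fix z' assume "z' \<in> ns_D D (prodmap C k (c_id C Y))
    \<and> lower C D (prodmap C k (c_id C Y)) (c_p1 C (c_cod C k) Y) z' = upper C D k (c_p1 C X Y) x
    \<and> lower C D (prodmap C k (c_id C Y)) (c_p2 C (c_cod C k) Y) z' = 0"
  then show "z' = z"
    using cartesian_eqI[of "prodmap C k (c_id C Y)" "c_cod C k" Y z' z] prodmap_id[OF k] z z1 z2
    by simp
qed (use z z1 z2 in simp)

lemma triv_bang: "bang (triv C D) X = (bang C X, 0)"
  unfolding bang_def[of "triv C D"]
proof (rule the_equality, goal_cases)
  case 1
  show ?case using bang D_terminal[of "bang C X"] by simp
next
  case (2 k)
  then show ?case using bang_unique D_terminal by (cases k) auto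
qed

lemma triv_pairing:
  assumes ab: "a \<in> c_mor C" "b \<in> c_mor C" "c_dom C a = c_dom C b"
    and z: "z \<in> ns_D D (pairing C a b)"
      "lower C D (pairing C a b) (c_p1 C (c_cod C a) (c_cod C b)) z = x"
      "lower C D (pairing C a b) (c_p2 C (c_cod C a) (c_cod C b)) z = y"
  shows "pairing (triv C D) (a, x) (b, y) = (pairing C a b, z)"
  unfolding pairing_def[of "triv C D"]
proof (rule the_equality, goal_cases)
  case 1
  show ?case using pairing[OF ab] z by simp
next
  case (2 k)
  obtain k1 k2 where k: "k = (k1, k2)" by fastforce
  let ?p1 = "c_p1 C (c_cod C a) (c_cod C b)" and ?p2 = "c_p2 C (c_cod C a) (c_cod C b)"
  from 2 have k1: "k1 \<in> c_mor C" "k2 \<in> ns_D D k1" "c_dom C k1 = c_dom C a"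
    "c_cod C k1 = BTimes (c_cod C a) (c_cod C b)" "c_cmp C ?p1 k1 = a" "c_cmp C ?p2 k1 = b"
    "lower C D k1 ?p1 k2 = x" "lower C D k1 ?p2 k2 = y"
    by (auto simp: k)
  have "k1 = pairing C a b"
    using pairing_unique[OF ab k1(1,3-6)] .
  moreover have "k2 = z"
    using cartesian_eqI[OF k1(1,4,2)] z k1(7,8) unfolding \<open>k1 = pairing C a b\<close> by simp
  ultimately show ?case using k by simp
qed

(* Composing with ev in D x| C yields the map x \<mapsto> ev_* phi_k(x, 0) of the definition of
   cartesian closedness. *)
lemma triv_ev_prodmap:
  assumes k: "k \<in> c_mor C" "c_dom C k = X" "c_cod C k = BExp Y Z" and x: "x \<in> ns_D D k"
  shows "c_cmp (triv C D) (c_ev (triv C D) Y Z) (prodmap (triv C D) (k, x) (c_id (triv C D) Y))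
     = (c_cmp C (c_ev C Y Z) (prodmap C k (c_id C Y)),
        lower C D (prodmap C k (c_id C Y)) (c_ev C Y Z) (phi0 C D X Y k x))"
proof -
  let ?a = "c_cmp C k (c_p1 C X Y)" and ?b = "c_p2 C X Y"
  let ?u = "upper C D k (c_p1 C X Y) x"
  have ab: "?a \<in> c_mor C" "?b \<in> c_mor C" "c_dom C ?a = c_dom C ?b"
    and cod_a: "c_cod C ?a = BExp Y Z"
    using k by simp_all
  note kY = prodmap_id[OF k(1,2), of Y]
  have kY_cod: "c_cod C (prodmap C k (c_id C Y)) = BTimes (BExp Y Z) Y"
    using kY k by simp
  have "?u \<in> ns_D D (c_cmp C (c_p1 C (BExp Y Z) Y) (prodmap C k (c_id C Y)))"
    using upper_in[OF k(1) p1_mor, of X Y x] pairing(4)[OF ab] cod_a kY k x by simp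
  moreover have "0 \<in> ns_D D (c_cmp C (c_p2 C (BExp Y Z) Y) (prodmap C k (c_id C Y)))"
    using kY k by simp
  ultimately obtain z where z: "z \<in> ns_D D (prodmap C k (c_id C Y))"
    "lower C D (prodmap C k (c_id C Y)) (c_p1 C (BExp Y Z) Y) z = ?u"
    "lower C D (prodmap C k (c_id C Y)) (c_p2 C (BExp Y Z) Y) z = 0"
    using cartesian_exists[OF kY(2) kY_cod] by blast
  have "prodmap (triv C D) (k, x) (c_id (triv C D) Y) = pairing (triv C D) (?a, ?u) (?b, 0)"
    unfolding prodmap_def using k by simp
  also have "\<dots> = (prodmap C k (c_id C Y), z)"
    using triv_pairing[OF ab, of z ?u 0] z cod_a kY by simp
  finally show ?thesis
    using phi0_eqI[OF k(1,2) z(1)] z kY k by simp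
qed

lemma triv_curry:
  assumes f: "f \<in> c_mor C" "c_dom C f = BTimes X Y"
    and k: "k \<in> ns_D D (curry_m C X Y f)"
    and x: "lower C D (prodmap C (curry_m C X Y f) (c_id C Y)) (c_ev C Y (c_cod C f))
              (phi0 C D X Y (curry_m C X Y f) k) = x"
  shows "curry_m (triv C D) X Y (f, x) = (curry_m C X Y f, k)"
  unfolding curry_m_def[of "triv C D"]
proof (rule the_equality, goal_cases)
  case 1
  show ?case using curry_m[OF f] triv_ev_prodmap[of "curry_m C X Y f" X Y "c_cod C f" k] k x by simp
next
  case (2 h)
  obtain h1 h2 where h: "h = (h1, h2)" by fastforce
  from 2 have h1: "h1 \<in> c_mor C" "h2 \<in> ns_D D h1" "c_dom C h1 = X" "c_cod C h1 = BExp Y (c_cod C f)"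
    by (auto simp: h)
  with 2 have h2: "c_cmp C (c_ev C Y (c_cod C f)) (prodmap C h1 (c_id C Y)) = f"
    "lower C D (prodmap C h1 (c_id C Y)) (c_ev C Y (c_cod C f)) (phi0 C D X Y h1 h2) = x"
    using triv_ev_prodmap[OF h1(1,3,4,2)] by (simp_all add: h)
  have "h1 = curry_m C X Y f"
    using curry_unique[OF f h1(1,3,4) h2(1)] .
  moreover have "h2 = k"
    using bij_betw_imp_inj_on[OF curry_bij[OF f]] h1(2) k h2(2) x
    unfolding \<open>h1 = curry_m C X Y f\<close> by (auto dest: inj_onD)
  ultimately show ?case using h by simp
qed

lemma DerFun_curry:
  assumes d: "d \<in> DerFun C D" and f: "f \<in> c_mor C" "c_dom C f = BTimes X Y"
  shows "lower C D (prodmap C (curry_m C X Y f) (c_id C Y)) (c_ev C Y (c_cod C f))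
           (phi0 C D X Y (curry_m C X Y f) (d (curry_m C X Y f))) = d f"
proof -
  define h where "h = curry_m C X Y f"
  define g where "g = prodmap C h (c_id C Y)"
  have h: "h \<in> c_mor C" "c_dom C h = X" "c_cod C h = BExp Y (c_cod C f)"
    "c_cmp C (c_ev C Y (c_cod C f)) g = f"
    using curry_m[OF f] unfolding h_def g_def by simp_all
  have g: "g = pairing C (c_cmp C h (c_p1 C X Y)) (c_p2 C X Y)" "g \<in> c_mor C"
    "c_cod C g = BTimes (c_cod C h) Y"
    using prodmap_id[OF h(1,2)] unfolding g_def by simp_all
  have "d (c_cmp C h (c_p1 C X Y)) = upper C D h (c_p1 C X Y) (d h)"
    using DerFun_cmp_right_zero[OF d h(1) p1_mor] d h by simp
  then have "phi0 C D X Y h (d h) = d g"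
    using phi0_eqI[OF h(1,2), of "d g"] DerFun_in_D[OF d g(2)]
      DerFun_pairing[OF d, of "c_cmp C h (c_p1 C X Y)" "c_p2 C X Y"] g h d
    unfolding g_def by simp
  moreover have "d f = lower C D g (c_ev C Y (c_cod C f)) (d g)"
    using DerFun_cmp_left_zero[OF d ev_mor g(2)] d g h by simp
  ultimately show ?thesis unfolding h_def g_def by simp
qed

lemma interp_triv_DerFun:
  assumes d: "d \<in> DerFun C D" and "wt t"
  shows "interp (triv C D) t = (interp C t, d (interp C t))"
  using \<open>wt t\<close>
proof (induction t)
  case (TBang X)
  show ?case using triv_bang DerFun_in_D[OF d bang(1)] D_terminal[OF bang(1,3)] by simp
next
  case (TComp t u)
  then show ?case using interp_typed DerFun_cmp[OF d] by simp
next
  case (TPair t u)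
  then have ab: "interp C t \<in> c_mor C" "interp C u \<in> c_mor C"
    "c_dom C (interp C t) = c_dom C (interp C u)"
    using interp_typed by simp_all
  with TPair show ?case
    using triv_pairing[OF ab DerFun_in_D[OF d pairing(1)[OF ab]] DerFun_pairing[OF d ab]] by simp
next
  case (TCurry t)
  then obtain X Y where XY: "tdom t = BTimes X Y" by (cases "tdom t") auto
  with TCurry have f: "interp C t \<in> c_mor C" "c_dom C (interp C t) = BTimes X Y"
    using interp_typed[of t] by simp_all
  with TCurry XY show ?case
    using triv_curry[OF f DerFun_in_D[OF d curry_m(1)[OF f]] DerFun_curry[OF d f]] by simp
qed (use d in simp_all)

end

section \<open>Sections versus derivations\<close>

definition section_of :: "('s, 'm, 'x) sccc_scheme \<Rightarrow> ('m \<Rightarrow> 'a) \<Rightarrow> 'm \<Rightarrow> 'm \<times> 'a" where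
  "section_of C d = restrict (\<lambda>f. (f, d f)) (c_mor C)"

definition derivation_of :: "('s, 'm, 'x) sccc_scheme \<Rightarrow> ('m \<Rightarrow> 'm \<times> 'a) \<Rightarrow> 'm \<Rightarrow> 'a" where
  "derivation_of C s = restrict (\<lambda>f. snd (s f)) (c_mor C)"

lemma Der_grp_mult:
  "s \<otimes>\<^bsub>Der_grp C D\<^esub> s' = section_of C (derivation_of C s \<otimes>\<^bsub>DerFun_grp C D\<^esub> derivation_of C s')"
  by (auto simp: Der_grp_def DerFun_grp_def section_of_def derivation_of_def)

lemma Der_grp_one: "\<one>\<^bsub>Der_grp C D\<^esub> = section_of C \<one>\<^bsub>DerFun_grp C D\<^esub>"
  by (auto simp: Der_grp_def DerFun_grp_def section_of_def)

lemma
  assumes "s \<in> Der C D"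
  shows Der_extensional: "s \<in> extensional (c_mor C)"
    and Der_fst [simp]: "f \<in> c_mor C \<Longrightarrow> fst (s f) = f"
    and Der_in_D: "f \<in> c_mor C \<Longrightarrow> snd (s f) \<in> ns_D D f"
    and Der_cmp: "f \<in> c_mor C \<Longrightarrow> g \<in> c_mor C \<Longrightarrow> c_dom C f = c_cod C g \<Longrightarrow>
         s (c_cmp C f g) = c_cmp (triv C D) (s f) (s g)"
    and Der_interp: "wt t \<Longrightarrow> s (interp C t) = interp (triv C D) t"
  using assms unfolding Der_def by (auto simp: case_prod_beta)

lemma section_of_derivation_of:
  assumes "s \<in> Der C D"
  shows "section_of C (derivation_of C s) = s"
proof
  fix f
  show "section_of C (derivation_of C s) f = s f"
    using Der_extensional[OF assms] Der_fst[OF assms, of f]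
    by (cases "f \<in> c_mor C")
      (auto simp: section_of_def derivation_of_def prod_eq_iff extensional_def)
qed

lemma derivation_of_section_of:
  assumes "d \<in> extensional (c_mor C)"
  shows "derivation_of C (section_of C d) = d"
  using assms by (auto simp: section_of_def derivation_of_def extensional_def)

context natural_system
begin

lemma derivation_of_in_DerFun:
  assumes s: "s \<in> Der C D"
  shows "derivation_of C s \<in> DerFun C D"
  using Der_in_D[OF s] Der_fst[OF s] Der_cmp[OF s]
    Der_interp[OF s, of "TP1 _ _"] Der_interp[OF s, of "TP2 _ _"] Der_interp[OF s, of "TEv _ _"]
  unfolding DerFun_def derivation_of_def by auto

end

context cart_closed_natural_system
begin

lemma section_of_in_Der:
  assumes d: "d \<in> DerFun C D"
  shows "section_of C d \<in> Der C D"
  using DerFun_in_D[OF d] DerFun_cmp[OF d] DerFun_id[OF d] interp_triv_DerFun[OF d] interp_typed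
  unfolding Der_def section_of_def by auto

lemma section_of_iso: "section_of C \<in> iso (DerFun_grp C D) (Der_grp C D)"
proof (rule isoI)
  have "section_of C (d \<otimes>\<^bsub>DerFun_grp C D\<^esub> e) = section_of C d \<otimes>\<^bsub>Der_grp C D\<^esub> section_of C e"
    if "d \<in> DerFun C D" "e \<in> DerFun C D" for d e
    using that by (simp add: Der_grp_mult derivation_of_section_of DerFun_extensional)
  then show "section_of C \<in> hom (DerFun_grp C D) (Der_grp C D)"
    using section_of_in_Der by (auto simp: hom_def Der_grp_def DerFun_grp_def)
  show "bij_betw (section_of C) (carrier (DerFun_grp C D)) (carrier (Der_grp C D))"
    by (rule bij_betw_byWitness[where f' = "derivation_of C"])
      (auto simp: Der_grp_def DerFun_grp_def section_of_derivation_of derivation_of_section_of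
        derivation_of_in_DerFun section_of_in_Der DerFun_extensional)
qed

lemma monoid_Der_grp: "monoid (Der_grp C D)"
proof -
  interpret F: comm_group "DerFun_grp C D" by (rule comm_group_DerFun_grp)
  have carrier_F: "derivation_of C s \<in> carrier (DerFun_grp C D)"
    if "s \<in> carrier (Der_grp C D)" for s
    using derivation_of_in_DerFun that by (simp add: Der_grp_def DerFun_grp_def)
  have carrier_D: "section_of C d \<in> carrier (Der_grp C D)"
    if "d \<in> carrier (DerFun_grp C D)" for d
    using section_of_in_Der that by (simp add: Der_grp_def DerFun_grp_def)
  show ?thesis
  proof (rule monoidI)
    fix s s' assume "s \<in> carrier (Der_grp C D)" "s' \<in> carrier (Der_grp C D)"
    then show "s \<otimes>\<^bsub>Der_grp C D\<^esub> s' \<in> carrier (Der_grp C D)"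
      unfolding Der_grp_mult by (intro carrier_D F.m_closed carrier_F)
  next
    show "\<one>\<^bsub>Der_grp C D\<^esub> \<in> carrier (Der_grp C D)"
      unfolding Der_grp_one by (intro carrier_D F.one_closed)
  next
    fix s assume "s \<in> carrier (Der_grp C D)"
    then have s: "s \<in> Der C D" by (simp add: Der_grp_def)
    show "\<one>\<^bsub>Der_grp C D\<^esub> \<otimes>\<^bsub>Der_grp C D\<^esub> s = s"
      "s \<otimes>\<^bsub>Der_grp C D\<^esub> \<one>\<^bsub>Der_grp C D\<^esub> = s"
      using Der_extensional[OF s] Der_fst[OF s]
      by (auto intro!: ext simp: Der_grp_def prod_eq_iff extensional_def)
  qed (auto intro!: ext simp: Der_grp_def add.assoc)
qed

end

theorem mainTheorem4:
  fixes C :: "('s, 'm) sccc" and D :: "('m, 'a::ab_group_add) natsys"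
  assumes "is_sccc C" and "is_natsys C D" and "is_cart_closed C D"
  shows "comm_group (Der_grp C D) \<and> comm_group (DerFun_grp C D) \<and> Der_grp C D \<cong> DerFun_grp C D"
proof -
  interpret cart_closed_natural_system C D
    using assms by unfold_locales
  interpret DerFun: comm_group "DerFun_grp C D"
    by (rule comm_group_DerFun_grp)
  have iso: "DerFun_grp C D \<cong> Der_grp C D"
    using section_of_iso by (rule is_isoI)
  show ?thesis
    using DerFun.iso_imp_comm_group[OF iso monoid_Der_grp] DerFun.iso_sym[OF iso]
      DerFun.comm_group_axioms by simp
qed

end
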